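(* Let $(D_d)_{d\in\mathbb{N}}$ satisfy Property (P). Let $(L_d)_{d\in\mathbb N}$ be positive numbers and \[ C_d^0(L)=\{f\colon D_d\to\mathbb{R} \mid \|f\|_\infty\le 1,\ \operatorname{Lip}(f)\le L_d\}. \] Then the curse of dimensionality holds for the integration problem on $(C_d^0(L))_{d}$ if and only if $\limsup_{d\to\infty} L_d\sqrt{d}>0$.
   Context: Property (P): $(D_d)_{d\in\mathbb{N}}$ is a sequence of open sets $D_d\subset\mathbb{R}^d$ with Lebesgue measure $\lambda_d(D_d)=1$ for which there exist points $x_d^*\in D_d$ and $R<\infty$ with $\lim_{d\to\infty}\lambda_d(\{x\in D_d\mid \|x-x_d^*\|_2\ge R\sqrt d\})=0$. $\operatorname{Lip}(f)=\sup_{x\neq y}|f(x)-f(y)|/\|x-y\|_2$ and $\|f\|_\infty=\sup_{x\in D_d}|f(x)|$. Integration problem: approximate $S_d(f)=\int_{D_d}f(x)\,dx$ for $f\in F_d$ by algorithms $A_{n,d}(f)=\phi_{n,d}(f(x_1),\dots,f(x_n))$ with points $x_j\in D_d$ possibly chosen adaptively (depending on previously computed values) and arbitrary $\phi_{n,d}\colon\mathbb{R}^n\to\mathbb{R}$ (for $n=0$, constant algorithms). The worst-case error is $e(A_{n,d})=\sup_{f\in F_d}|S_d(f)-A_{n,d}(f)|$, and the information complexity $n(\varepsilon,F_d)$ is the minimal $n$ for which some such $A_{n,d}$ has $e(A_{n,d})\le\varepsilon$. The curse of dimensionality holds for $(F_d)$ if there exist $c,\varepsilon_0,\gamma>0$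 with $n(\varepsilon,F_d)\ge c(1+\gamma)^d$ for all $\varepsilon\le\varepsilon_0$ and infinitely many $d\in\mathbb{N}$. *)

theory Defs
  imports "HOL-Probability.Probability"
begin

text \<open>R^d is represented by the extensional functions on {..<d}:
  the carrier of the finite product measure below.\<close>

definition lebesgue_d :: "nat \<Rightarrow> (nat \<Rightarrow> real) measure" where
  "lebesgue_d d = PiM {..<d} (\<lambda>_. lborel)"

definition space_d :: "nat \<Rightarrow> (nat \<Rightarrow> real) set" where
  "space_d d = PiE {..<d} (\<lambda>_. UNIV)"

definition dist_d :: "nat \<Rightarrow> (nat \<Rightarrow> real) \<Rightarrow> (nat \<Rightarrow> real) \<Rightarrow> real" where
  "dist_d d x y = sqrt (\<Sum>i<d. (x i - y i)^2)"

definition open_d :: "nat \<Rightarrow> (nat \<Rightarrow> real) set \<Rightarrow> bool" where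
  "open_d d U \<longleftrightarrow> U \<subseteq> space_d d \<and>
     (\<forall>x\<in>U. \<exists>r>0. \<forall>y\<in>space_d d. dist_d d x y < r \<longrightarrow> y \<in> U)"

definition property_P :: "(nat \<Rightarrow> (nat \<Rightarrow> real) set) \<Rightarrow> bool" where
  "property_P D \<longleftrightarrow>
     (\<forall>d. open_d d (D d) \<and> D d \<in> sets (lebesgue_d d) \<and> emeasure (lebesgue_d d) (D d) = 1) \<and>
     (\<exists>(xs :: nat \<Rightarrow> nat \<Rightarrow> real) (R :: real). (\<forall>d. xs d \<in> D d) \<and>
        (\<lambda>d. measure (lebesgue_d d) {x \<in> D d. dist_d d x (xs d) \<ge> R * sqrt (real d)})
          \<longlonglongrightarrow> 0)"

definition C0 :: "(nat \<Rightarrow> (nat \<Rightarrow> real) set) \<Rightarrow> (nat \<Rightarrow> real) \<Rightarrow> nat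
                  \<Rightarrow> ((nat \<Rightarrow> real) \<Rightarrow> real) set" where
  "C0 D L d = {f. (\<forall>x\<in>D d. \<bar>f x\<bar> \<le> 1) \<and>
                  (\<forall>x\<in>D d. \<forall>y\<in>D d. \<bar>f x - f y\<bar> \<le> L d * dist_d d x y)}"

definition S_d :: "(nat \<Rightarrow> (nat \<Rightarrow> real) set) \<Rightarrow> nat \<Rightarrow> ((nat \<Rightarrow> real) \<Rightarrow> real) \<Rightarrow> real" where
  "S_d D d f = (LINT x:D d|lebesgue_d d. f x)"

text \<open>Adaptive information: the k-th point is P k applied to the list of the
  previously computed k function values.\<close>
fun info :: "(nat \<Rightarrow> real list \<Rightarrow> (nat \<Rightarrow> real)) \<Rightarrow> ((nat \<Rightarrow> real) \<Rightarrow> real) \<Rightarrow> nat \<Rightarrow> real list" where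
  "info P f 0 = []"
| "info P f (Suc k) = info P f k @ [f (P k (info P f k))]"

definition admissible_points :: "(nat \<Rightarrow> (nat \<Rightarrow> real) set) \<Rightarrow> nat \<Rightarrow> nat
     \<Rightarrow> (nat \<Rightarrow> real list \<Rightarrow> (nat \<Rightarrow> real)) \<Rightarrow> bool" where
  "admissible_points D d n P \<longleftrightarrow> (\<forall>k<n. \<forall>ys. length ys = k \<longrightarrow> P k ys \<in> D d)"

definition achieves :: "(nat \<Rightarrow> (nat \<Rightarrow> real) set) \<Rightarrow> nat \<Rightarrow> ((nat \<Rightarrow> real) \<Rightarrow> real) set
     \<Rightarrow> nat \<Rightarrow> real \<Rightarrow> bool" where
  "achieves D d F n \<epsilon> \<longleftrightarrow>
     (\<exists>P (\<phi> :: real list \<Rightarrow> real). admissible_points D d n P \<and>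
        (\<forall>f\<in>F. \<bar>S_d D d f - \<phi> (info P f n)\<bar> \<le> \<epsilon>))"

text \<open>Curse of dimensionality: n(eps,F_d) \<ge> c(1+gamma)^d, i.e. every n achieving
  error eps satisfies the bound (information complexity is the least such n).\<close>
definition curse :: "(nat \<Rightarrow> (nat \<Rightarrow> real) set) \<Rightarrow> (nat \<Rightarrow> ((nat \<Rightarrow> real) \<Rightarrow> real) set) \<Rightarrow> bool" where
  "curse D F \<longleftrightarrow> (\<exists>c \<epsilon>0 \<gamma>. c > 0 \<and> \<epsilon>0 > 0 \<and> \<gamma> > 0 \<and>
     infinite {d. \<forall>\<epsilon>. 0 < \<epsilon> \<and> \<epsilon> \<le> \<epsilon>0 \<longrightarrow>
        (\<forall>n. achieves D d (F d) n \<epsilon> \<longrightarrow> real n \<ge> c * (1 + \<gamma>) ^ d)})"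

end

theory Submission
  imports Defs
begin

text \<open>If \<open>L_d \<surd>d \<rightarrow> 0\<close>, the algorithm returning \<open>f(x*_d)\<close> has error at most
  \<open>L_d R \<surd>d + 2 \<lambda>_d(far part of D_d)\<close>, which tends to \<open>0\<close>; so one function value suffices
  for every \<open>\<epsilon>\<close> in large dimensions. Conversely, if \<open>L_d \<surd>d > c\<close> and an algorithm uses
  \<open>n < 2^d/2\<close> values, let \<open>p_j\<close> be the nodes it chooses for the zero function and
  \<open>g = min 1 (L_d dist(\<cdot>, {p_j}))\<close>. Then \<open>g\<close> and \<open>-g\<close> yield the same (zero) information,
  but a Gaussian Chernoff bound shows that the balls of radius \<open>r \<surd>d\<close> around the nodes have
  total volume at most \<open>n (\<surd>(2\<pi>e) r)^d \<le> 1/2\<close> for suitable \<open>r\<close>, so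
  \<open>S(g) \<ge> min 1 (c r) / 2\<close>.\<close>

lemma space_lebesgue_d[simp]: "space (lebesgue_d d) = space_d d"
  by (simp add: lebesgue_d_def space_d_def space_PiM)

lemma dist_d_measurable[measurable]: "(\<lambda>x. dist_d d x q) \<in> borel_measurable (lebesgue_d d)"
proof -
  have "i < d \<Longrightarrow> (\<lambda>x. x i) \<in> borel_measurable (lebesgue_d d)" for i
    unfolding lebesgue_d_def by (metis lessThan_iff measurable_component_singleton measurable_lborel1)
  then show ?thesis
    unfolding dist_d_def by measurable
qed

lemma sets_dist_d_less[measurable]:
  "{x \<in> space_d d. dist_d d x q < r} \<in> sets (lebesgue_d d)"
proof -
  have "{x \<in> space (lebesgue_d d). dist_d d x q < r} \<in> sets (lebesgue_d d)"
    by measurable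
  then show ?thesis
    by simp
qed

lemma dist_d_nonneg: "0 \<le> dist_d d x y"
  by (simp add: dist_d_def sum_nonneg)

lemma dist_d_self[simp]: "dist_d d x x = 0"
  by (simp add: dist_d_def)

lemma dist_d_commute: "dist_d d x y = dist_d d y x"
  by (simp add: dist_d_def power2_commute)

lemma dist_d_triangle: "dist_d d x z \<le> dist_d d x y + dist_d d y z"
proof -
  have "dist_d d x z = L2_set (\<lambda>i. (x i - y i) + (y i - z i)) {..<d}"
    by (simp add: dist_d_def L2_set_def)
  also have "\<dots> \<le> L2_set (\<lambda>i. x i - y i) {..<d} + L2_set (\<lambda>i. y i - z i) {..<d}"
    by (rule L2_set_triangle_ineq)
  finally show ?thesis
    by (simp add: dist_d_def L2_set_def)
qed

lemma open_d_subset_space: "open_d d U \<Longrightarrow> U \<subseteq> space_d d"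
  by (simp add: open_d_def)

section \<open>Measurability of Lipschitz functions\<close>

lemma rational_point_near:
  assumes x: "x \<in> space_d d" and \<delta>: "\<delta> > 0"
  obtains q where "q \<in> PiE {..<d} (\<lambda>_. \<rat>)" "dist_d d x q < \<delta>"
proof -
  define \<eta> where "\<eta> = \<delta> / (real d + 1)"
  have \<eta>: "\<eta> > 0"
    using \<delta> by (simp add: \<eta>_def)
  have "\<forall>i. \<exists>r\<in>\<rat>. x i - \<eta> < r \<and> r < x i + \<eta>"
    using Rats_dense_in_real \<eta> by simp
  then obtain z where z: "\<And>i. z i \<in> \<rat>" "\<And>i. \<bar>x i - z i\<bar> < \<eta>"
    by (metis abs_diff_less_iff abs_minus_commute)
  define q where "q = restrict z {..<d}"
  have "(\<Sum>i<d. (x i - q i)^2) \<le> (\<Sum>i<d. \<eta>^2)"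
  proof (rule sum_mono)
    fix i assume "i \<in> {..<d}"
    then show "(x i - q i)^2 \<le> \<eta>^2"
      using z(2)[of i] \<eta> abs_le_square_iff[of "x i - z i" \<eta>] by (simp add: q_def)
  qed
  also have "\<dots> < \<delta>^2"
  proof -
    have "real d * \<eta>^2 < (real d + 1)^2 * \<eta>^2"
      using \<eta> by (intro mult_strict_right_mono) (auto simp: power2_eq_square algebra_simps add_pos_nonneg)
    then show ?thesis
      by (simp add: \<eta>_def power_divide)
  qed
  finally have "dist_d d x q < sqrt (\<delta>^2)"
    unfolding dist_d_def by (rule real_sqrt_less_mono)
  then have "dist_d d x q < \<delta>"
    using \<delta> by simp
  moreover have "q \<in> PiE {..<d} (\<lambda>_. \<rat>)"
    using z(1) by (simp add: q_def)
  ultimately show thesis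
    using that by blast
qed

lemma lipschitz_eq_INF_dense:
  assumes K: "K \<ge> 0" and lip: "\<forall>x\<in>D. \<forall>y\<in>D. \<bar>f x - f y\<bar> \<le> K * dist_d d x y"
    and Q: "Q \<subseteq> D" and dense: "\<And>e. e > 0 \<Longrightarrow> \<exists>q\<in>Q. dist_d d x q < e" and x: "x \<in> D"
  shows "f x = (INF q\<in>Q. f q + K * dist_d d x q)"
proof (rule antisym)
  have lip_x: "\<bar>f x - f q\<bar> \<le> K * dist_d d x q" if "q \<in> Q" for q
    using lip x Q that by blast
  have Q_ne: "Q \<noteq> {}"
    using dense[of 1] by auto
  have bdd: "bdd_below ((\<lambda>q. f q + K * dist_d d x q) ` Q)"
  proof (rule bdd_belowI2)
    fix q assume "q \<in> Q"
    then show "f x \<le> f q + K * dist_d d x q"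
      using lip_x unfolding abs_le_iff by fastforce
  qed
  show "f x \<le> (INF q\<in>Q. f q + K * dist_d d x q)"
    using lip_x unfolding abs_le_iff by (intro cINF_greatest[OF Q_ne]) fastforce
  show "(INF q\<in>Q. f q + K * dist_d d x q) \<le> f x"
  proof (rule field_le_epsilon)
    fix e :: real assume "e > 0"
    then obtain q where q: "q \<in> Q" "dist_d d x q < e / (2 * K + 1)"
      using dense[of "e / (2 * K + 1)"] K by auto
    have "(2 * K + 1) * dist_d d x q \<le> e"
      using q(2) K by (simp add: field_simps)
    then have "f q + K * dist_d d x q \<le> f x + e"
      using lip_x[OF q(1)] dist_d_nonneg[of d x q] K by (simp add: abs_le_iff algebra_simps)
    then show "(INF q\<in>Q. f q + K * dist_d d x q) \<le> f x + e"
      using cINF_lower[OF bdd q(1)] by linarith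
  qed
qed

lemma lipschitz_on_open_measurable:
  assumes D: "open_d d D" "D \<in> sets (lebesgue_d d)" and K: "K \<ge> 0"
    and lip: "\<forall>x\<in>D. \<forall>y\<in>D. \<bar>f x - f y\<bar> \<le> K * dist_d d x y"
  shows "(\<lambda>x. indicator D x * f x) \<in> borel_measurable (lebesgue_d d)"
proof -
  define Q where "Q = D \<inter> PiE {..<d} (\<lambda>_. \<rat>)"
  have "countable Q"
    unfolding Q_def by (intro countable_Int2 countable_PiE finite_lessThan countable_rat)
  then have F_meas: "(\<lambda>x. INF q\<in>Q. f q + K * dist_d d x q) \<in> borel_measurable (lebesgue_d d)"
    by (intro borel_measurable_cINF_real) measurable
  have dense: "\<exists>q\<in>Q. dist_d d x q < e" if "x \<in> D" "e > 0" for x e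
  proof -
    obtain r where r: "r > 0" "\<forall>y\<in>space_d d. dist_d d x y < r \<longrightarrow> y \<in> D" and "x \<in> space_d d"
      using D(1) \<open>x \<in> D\<close> unfolding open_d_def by blast
    then obtain q where q: "q \<in> PiE {..<d} (\<lambda>_. \<rat>)" "dist_d d x q < min r e"
      using rational_point_near[of x d "min r e"] \<open>e > 0\<close> by auto
    then have "q \<in> space_d d"
      by (auto simp: space_d_def PiE_def Pi_def)
    then show ?thesis
      using r q by (auto simp: Q_def)
  qed
  have "(\<lambda>x. indicator D x * f x) = (\<lambda>x. indicator D x * (INF q\<in>Q. f q + K * dist_d d x q))"
    using lipschitz_eq_INF_dense[OF K lip _ dense] by (auto simp: Q_def indicator_def)
  then show ?thesis
    using F_meas D(2) by simp
qed

lemma lipschitz_on_open_integrable: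
  assumes D: "open_d d D" "D \<in> sets (lebesgue_d d)" "emeasure (lebesgue_d d) D < \<infinity>"
    and K: "K \<ge> 0" and lip: "\<forall>x\<in>D. \<forall>y\<in>D. \<bar>f x - f y\<bar> \<le> K * dist_d d x y"
    and bounded: "\<forall>x\<in>D. \<bar>f x\<bar> \<le> B"
  shows "integrable (lebesgue_d d) (\<lambda>x. indicator D x * f x)"
proof (rule Bochner_Integration.integrable_bound)
  show "integrable (lebesgue_d d) (\<lambda>x. B * indicator D x)"
    using D by (intro integrable_mult_right integrable_real_indicator) auto
  show "AE x in lebesgue_d d. norm (indicator D x * f x) \<le> norm (B * indicator D x)"
    using bounded by (intro AE_I2) (auto simp: indicator_def)
qed (rule lipschitz_on_open_measurable[OF D(1,2) K lip])

section \<open>Volume of balls of radius \<open>r \<surd>d\<close>\<close>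

lemma nn_integral_gaussian_weight:
  fixes r c :: real
  assumes r: "r > 0"
  shows "(\<integral>\<^sup>+y. ennreal (exp (1/2 - (y - c)^2 / (2 * r^2))) \<partial>lborel)
         = ennreal (exp (1/2) * sqrt (2 * pi) * r)"
proof -
  define K where "K = exp (1/2) * sqrt (2 * pi) * r"
  have "exp (1/2 - (y - c)^2 / (2 * r^2)) = K * normal_density c r y" for y
  proof -
    have "exp (1/2 - (y - c)^2 / (2 * r^2)) = exp (1/2) * exp (- ((y - c)^2 / (2 * r^2)))"
      by (metis exp_add diff_conv_add_uminus)
    also have "\<dots> = K * normal_density c r y"
      using r by (simp add: normal_density_def K_def real_sqrt_mult field_simps)
    finally show ?thesis .
  qed
  then have "(\<integral>\<^sup>+y. ennreal (exp (1/2 - (y - c)^2 / (2 * r^2))) \<partial>lborel)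
        = ennreal K * (\<integral>\<^sup>+y. ennreal (normal_density c r y) \<partial>lborel)"
    using r by (simp add: K_def ennreal_mult nn_integral_cmult)
  also have "(\<integral>\<^sup>+y. ennreal (normal_density c r y) \<partial>lborel) = 1"
    using r by (subst nn_integral_eq_integral) auto
  finally show ?thesis
    by (simp add: K_def)
qed

lemma indicator_ball_le_gaussian_prod:
  assumes r: "r > 0"
  shows "indicator {x \<in> space_d d. dist_d d x p < r * sqrt (real d)} x
         \<le> (\<Prod>i<d. ennreal (exp (1/2 - (x i - p i)^2 / (2 * r^2))))"
proof (cases "dist_d d x p < r * sqrt (real d)")
  case True
  define S where "S = (\<Sum>i<d. (x i - p i)^2)"
  have "sqrt S < sqrt (r^2 * real d)"
    using True r by (simp add: dist_d_def S_def real_sqrt_mult)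
  then have "S / (2 * r^2) < real d / 2"
    using r by (simp add: divide_simps mult.commute)
  then have "1 \<le> exp (real d / 2 - S / (2 * r^2))"
    by simp
  also have "real d / 2 - S / (2 * r^2) = (\<Sum>i<d. 1/2 - (x i - p i)^2 / (2 * r^2))"
    by (simp add: S_def sum_subtractf sum_divide_distrib)
  also have "exp \<dots> = (\<Prod>i<d. exp (1/2 - (x i - p i)^2 / (2 * r^2)))"
    by (rule exp_sum) simp
  finally show ?thesis
    by (simp add: prod_ennreal indicator_def)
qed simp

lemma emeasure_ball_sqrt_d_le:
  assumes r: "r > 0"
  shows "emeasure (lebesgue_d d) {x \<in> space_d d. dist_d d x p < r * sqrt (real d)}
         \<le> ennreal ((exp (1/2) * sqrt (2 * pi) * r) ^ d)"
proof -
  interpret product_sigma_finite "\<lambda>_::nat. lborel"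
    by standard
  let ?B = "{x \<in> space_d d. dist_d d x p < r * sqrt (real d)}"
  have "emeasure (lebesgue_d d) ?B = (\<integral>\<^sup>+x. indicator ?B x \<partial>lebesgue_d d)"
    by simp
  also have "\<dots> \<le> (\<integral>\<^sup>+x. (\<Prod>i<d. ennreal (exp (1/2 - (x i - p i)^2 / (2 * r^2)))) \<partial>lebesgue_d d)"
    using indicator_ball_le_gaussian_prod[OF r] by (intro nn_integral_mono) blast
  also have "\<dots> = (\<Prod>i<d. \<integral>\<^sup>+y. ennreal (exp (1/2 - (y - p i)^2 / (2 * r^2))) \<partial>lborel)"
    unfolding lebesgue_d_def by (rule product_nn_integral_prod) auto
  also have "\<dots> = ennreal ((exp (1/2) * sqrt (2 * pi) * r) ^ d)"
    using r by (simp add: nn_integral_gaussian_weight ennreal_power)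
  finally show ?thesis .
qed

lemma fmeasurable_Union_balls_sqrt_d:
  fixes n :: nat
  assumes r: "r > 0"
  shows "(\<Union>j<n. {x \<in> space_d d. dist_d d x (p j) < r * sqrt (real d)}) \<in> fmeasurable (lebesgue_d d)"
proof -
  have "{x \<in> space_d d. dist_d d x (p j) < r * sqrt (real d)} \<in> fmeasurable (lebesgue_d d)" for j
    using emeasure_ball_sqrt_d_le[OF r, of d "p j"] by (intro fmeasurableI) (auto simp: le_less_trans)
  then show ?thesis
    by (intro fmeasurable.finite_UN) auto
qed

lemma measure_Union_balls_sqrt_d_le:
  assumes r: "r > 0"
  shows "measure (lebesgue_d d) (\<Union>j<n. {x \<in> space_d d. dist_d d x (p j) < r * sqrt (real d)})
         \<le> real n * (exp (1/2) * sqrt (2 * pi) * r) ^ d"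
proof -
  have "measure (lebesgue_d d) (\<Union>j<n. {x \<in> space_d d. dist_d d x (p j) < r * sqrt (real d)})
        \<le> (\<Sum>j<n. measure (lebesgue_d d) {x \<in> space_d d. dist_d d x (p j) < r * sqrt (real d)})"
    by (rule measure_UNION_le) auto
  also have "\<dots> \<le> (\<Sum>j<n. (exp (1/2) * sqrt (2 * pi) * r) ^ d)"
    using emeasure_ball_sqrt_d_le[OF r] r unfolding measure_def
    by (intro sum_mono enn2real_leI) auto
  finally show ?thesis
    by simp
qed

section \<open>Lower bound by a fooling function\<close>

text \<open>\<open>fooling_fun K d p k x = min 1 (K * dist x {p 0, \<dots>, p (k - 1)})\<close>, defined by recursion on
  \<open>k\<close> so that no minimum over an empty set occurs.\<close>
fun fooling_fun :: "real \<Rightarrow> nat \<Rightarrow> (nat \<Rightarrow> nat \<Rightarrow> real) \<Rightarrow> nat \<Rightarrow> (nat \<Rightarrow> real) \<Rightarrow> real" where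
  "fooling_fun K d p 0 x = 1"
| "fooling_fun K d p (Suc k) x = min (fooling_fun K d p k x) (K * dist_d d x (p k))"

lemma fooling_fun_nonneg: "K \<ge> 0 \<Longrightarrow> 0 \<le> fooling_fun K d p k x"
  by (induction k) (auto simp: dist_d_nonneg)

lemma fooling_fun_le_1: "fooling_fun K d p k x \<le> 1"
  by (induction k) auto

lemma fooling_fun_vanishes: "K \<ge> 0 \<Longrightarrow> j < k \<Longrightarrow> fooling_fun K d p k (p j) = 0"
proof (induction k)
  case (Suc k)
  then show ?case
    using fooling_fun_nonneg[of K d p k "p j"] mult_nonneg_nonneg[OF Suc.prems(1) dist_d_nonneg]
    by (cases "j = k") (auto simp: min_def)
qed simp

lemma fooling_fun_lipschitz:
  assumes K: "K \<ge> 0"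
  shows "\<bar>fooling_fun K d p k x - fooling_fun K d p k y\<bar> \<le> K * dist_d d x y"
proof (induction k)
  case 0
  then show ?case
    using K dist_d_nonneg[of d x y] by simp
next
  case (Suc k)
  have "\<bar>dist_d d x (p k) - dist_d d y (p k)\<bar> \<le> dist_d d x y"
    using dist_d_triangle[of d x "p k" y] dist_d_triangle[of d y "p k" x]
    by (simp add: dist_d_commute[of d y x] abs_le_iff)
  then have "\<bar>K * dist_d d x (p k) - K * dist_d d y (p k)\<bar> \<le> K * dist_d d x y"
    using K by (simp add: abs_mult right_diff_distrib[symmetric] mult_left_mono)
  moreover have "\<bar>min a b - min a' b'\<bar> \<le> max \<bar>a - a'\<bar> \<bar>b - b'\<bar>" for a b a' b' :: real
    by (simp add: min_def max_def abs_if)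
  ultimately show ?case
    using Suc.IH by simp
qed

lemma fooling_fun_ge:
  assumes "K \<ge> 0" "\<forall>j<k. t \<le> dist_d d x (p j)"
  shows "min 1 (K * t) \<le> fooling_fun K d p k x"
  using assms(2)
proof (induction k)
  case (Suc k)
  then show ?case
    using assms(1) mult_left_mono[of t "dist_d d x (p k)" K] by simp
qed simp

lemma fooling_fun_in_C0:
  assumes "L d \<ge> 0"
  shows "fooling_fun (L d) d p k \<in> C0 D L d" "(\<lambda>x. - fooling_fun (L d) d p k x) \<in> C0 D L d"
proof -
  have "\<bar>fooling_fun (L d) d p k x\<bar> \<le> 1" for x
    using fooling_fun_nonneg[OF assms, of d p k x] fooling_fun_le_1[of "L d" d p k x] by linarith
  then show "fooling_fun (L d) d p k \<in> C0 D L d" "(\<lambda>x. - fooling_fun (L d) d p k x) \<in> C0 D L d"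
    using fooling_fun_lipschitz[OF assms, of d p k] by (auto simp: C0_def abs_minus_commute)
qed

lemma S_d_eq_integral: "S_d D d f = (\<integral>x. indicator (D d) x * f x \<partial>lebesgue_d d)"
  by (simp add: S_d_def set_lebesgue_integral_def)

lemma S_d_fooling_fun_ge:
  assumes D: "open_d d (D d)" "D d \<in> sets (lebesgue_d d)" "emeasure (lebesgue_d d) (D d) = 1"
    and K: "K \<ge> 0" and r: "r > 0"
  shows "min 1 (K * (r * sqrt (real d))) * (1 - real n * (exp (1/2) * sqrt (2 * pi) * r) ^ d)
         \<le> S_d D d (fooling_fun K d p n)"
proof -
  define a where "a = min 1 (K * (r * sqrt (real d)))"
  define U where "U = (\<Union>j<n. {x \<in> space_d d. dist_d d x (p j) < r * sqrt (real d)})"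
  let ?g = "fooling_fun K d p n"
  have a: "0 \<le> a"
    using K r by (simp add: a_def)
  have U: "U \<in> fmeasurable (lebesgue_d d)"
    unfolding U_def by (rule fmeasurable_Union_balls_sqrt_d[OF r])
  have D_fin: "D d \<in> fmeasurable (lebesgue_d d)"
    using D by (intro fmeasurableI) auto
  have "a * indicator (D d) x - a * indicator U x \<le> indicator (D d) x * ?g x" for x
  proof -
    have "x \<in> space_d d \<Longrightarrow> x \<notin> U \<Longrightarrow> a \<le> ?g x"
      unfolding a_def by (rule fooling_fun_ge[OF K]) (auto simp: U_def not_less)
    then show ?thesis
      using open_d_subset_space[OF D(1)] a fooling_fun_nonneg[OF K, of d p n x]
      by (auto simp: indicator_def)
  qed
  moreover have "integrable (lebesgue_d d) (\<lambda>x. indicator (D d) x * ?g x)"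
    using D fooling_fun_lipschitz[OF K] fooling_fun_nonneg[OF K] fooling_fun_le_1
    by (intro lipschitz_on_open_integrable[OF D(1,2) _ K, where B=1]) (auto simp: abs_le_iff)
  moreover have int_D: "integrable (lebesgue_d d) (\<lambda>x. a * indicator (D d) x)"
    and int_U: "integrable (lebesgue_d d) (\<lambda>x. a * indicator U x)"
    using U D_fin by (auto intro!: integrable_real_indicator simp: fmeasurable_def)
  ultimately have "(\<integral>x. a * indicator (D d) x - a * indicator U x \<partial>lebesgue_d d) \<le> S_d D d ?g"
    unfolding S_d_eq_integral by (intro integral_mono Bochner_Integration.integrable_diff)
  moreover have "(\<integral>x. a * indicator (D d) x - a * indicator U x \<partial>lebesgue_d d)
                 = a * (1 - measure (lebesgue_d d) U)"
  proof -
    have "D d \<inter> space_d d = D d" "U \<inter> space_d d = U"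
      using open_d_subset_space[OF D(1)] by (auto simp: U_def)
    then show ?thesis
      using D int_D int_U by (simp add: measure_def right_diff_distrib)
  qed
  moreover have "a * (1 - real n * (exp (1/2) * sqrt (2 * pi) * r) ^ d) \<le> a * (1 - measure (lebesgue_d d) U)"
    using measure_Union_balls_sqrt_d_le[OF r, where d=d and n=n and p=p] a by (simp add: U_def mult_left_mono)
  ultimately show ?thesis
    by (simp add: a_def)
qed

lemma info_eq_replicate_zero:
  "(\<forall>j<k. f (P j (replicate j 0)) = 0) \<Longrightarrow> info P f k = replicate k 0"
  by (induction k) (simp_all add: replicate_append_same)

text \<open>If \<open>g\<close> and \<open>-g\<close> both lie in \<open>F\<close> and vanish at the nodes which the algorithm
  chooses on the zero function, the algorithm cannot distinguish them, while their
  integrals are \<open>S g\<close> and \<open>-S g\<close>.\<close>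
lemma achieves_fooling:
  assumes "achieves D d F n \<epsilon>"
  obtains P where
    "\<And>g. g \<in> F \<Longrightarrow> (\<lambda>x. - g x) \<in> F \<Longrightarrow> \<forall>j<n. g (P j (replicate j 0)) = 0 \<Longrightarrow> S_d D d g \<le> \<epsilon>"
proof -
  obtain P \<phi> where err: "\<forall>f\<in>F. \<bar>S_d D d f - \<phi> (info P f n)\<bar> \<le> \<epsilon>"
    using assms unfolding achieves_def by blast
  have "S_d D d g \<le> \<epsilon>"
    if "g \<in> F" "(\<lambda>x. - g x) \<in> F" and zero: "\<forall>j<n. g (P j (replicate j 0)) = 0" for g
  proof -
    have "info P g n = replicate n 0" "info P (\<lambda>x. - g x) n = replicate n 0"
      using zero by (auto intro: info_eq_replicate_zero)
    then have "\<bar>S_d D d g - \<phi> (replicate n 0)\<bar> \<le> \<epsilon>"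
      "\<bar>S_d D d (\<lambda>x. - g x) - \<phi> (replicate n 0)\<bar> \<le> \<epsilon>"
      using err that(1,2) by metis+
    moreover have "S_d D d (\<lambda>x. - g x) = - S_d D d g"
      by (simp add: S_d_eq_integral)
    ultimately show ?thesis
      by (simp add: abs_le_iff)
  qed
  then show thesis
    by (rule that)
qed

lemma C0_information_lower_bound:
  assumes D: "open_d d (D d)" "D d \<in> sets (lebesgue_d d)" "emeasure (lebesgue_d d) (D d) = 1"
    and L: "L d \<ge> 0" and c: "c \<le> L d * sqrt (real d)"
    and \<epsilon>: "\<epsilon> < min 1 (c / (4 * exp (1/2) * sqrt (2 * pi))) / 2"
    and "achieves D d (C0 D L d) n \<epsilon>"
  shows "2 ^ d / 2 \<le> real n"
proof (rule ccontr)
  assume "\<not> 2 ^ d / 2 \<le> real n"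
  then have "real n * 2 \<le> 4 ^ d"
    using power_mono[of "2::real" 4 d] by linarith
  then have "real n * (1/4) ^ d \<le> 1/2"
    by (simp add: power_one_over field_simps)
  define r where "r = 1 / (4 * exp (1/2) * sqrt (2 * pi))"
  have r: "r > 0" "exp (1/2) * sqrt (2 * pi) * r = 1/4"
    by (simp_all add: r_def)
  obtain P where fool: "\<And>g. g \<in> C0 D L d \<Longrightarrow> (\<lambda>x. - g x) \<in> C0 D L d
                 \<Longrightarrow> \<forall>j<n. g (P j (replicate j 0)) = 0 \<Longrightarrow> S_d D d g \<le> \<epsilon>"
    using achieves_fooling[OF assms(7)] by metis
  define p where "p j = P j (replicate j 0)" for j
  define g where "g = fooling_fun (L d) d p n"
  have "\<forall>j<n. g (P j (replicate j 0)) = 0"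
    using fooling_fun_vanishes[OF L, of _ n d p] by (simp add: g_def p_def)
  then have "S_d D d g \<le> \<epsilon>"
    using fool fooling_fun_in_C0[of L d, OF L] by (simp add: g_def)
  moreover have "min 1 (L d * (r * sqrt (real d))) * (1 - real n * (1/4) ^ d) \<le> S_d D d g"
    using S_d_fooling_fun_ge[where D=D and d=d, OF D L r(1)] by (simp add: g_def r(2))
  moreover have "min 1 (c * r) / 2 \<le> min 1 (L d * (r * sqrt (real d))) * (1 - real n * (1/4) ^ d)"
  proof -
    have "c * r \<le> L d * (r * sqrt (real d))"
      using mult_right_mono[OF c, of r] r(1) by (simp add: ac_simps)
    then have "min 1 (c * r) / 2 \<le> min 1 (L d * (r * sqrt (real d))) * (1/2)"
      by simp
    also have "\<dots> \<le> min 1 (L d * (r * sqrt (real d))) * (1 - real n * (1/4) ^ d)"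
      using \<open>real n * (1/4) ^ d \<le> 1/2\<close> L r(1) by (intro mult_left_mono) auto
    finally show ?thesis .
  qed
  moreover have "\<epsilon> < min 1 (c * r) / 2"
    using \<epsilon> by (simp add: r_def)
  ultimately show False
    by linarith
qed

section \<open>Upper bound by one function value\<close>

lemma C0_deviation_le:
  assumes L: "L d \<ge> 0" and f: "f \<in> C0 D L d" and x: "x \<in> D d" and z: "z \<in> D d"
  shows "\<bar>f x - f z\<bar> \<le> L d * (\<bar>R\<bar> * sqrt (real d))
           + 2 * indicator {x \<in> D d. R * sqrt (real d) \<le> dist_d d x z} x"
proof (cases "R * sqrt (real d) \<le> dist_d d x z")
  case True
  have "\<bar>f x\<bar> \<le> 1" "\<bar>f z\<bar> \<le> 1"
    using f x z by (auto simp: C0_def)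
  moreover have "0 \<le> L d * (\<bar>R\<bar> * sqrt (real d))"
    using L by simp
  ultimately show ?thesis
    using True x by simp
next
  case False
  have "\<bar>f x - f z\<bar> \<le> L d * dist_d d x z"
    using f x z by (auto simp: C0_def)
  also have "\<dots> \<le> L d * (\<bar>R\<bar> * sqrt (real d))"
    using False L by (intro mult_left_mono) (auto simp: not_le abs_mult_pos)
  finally show ?thesis
    using False by (simp add: indicator_def)
qed

lemma fmeasurable_dist_d_ge_subset:
  assumes "A \<in> fmeasurable (lebesgue_d d)"
  shows "{x \<in> A. t \<le> dist_d d x z} \<in> fmeasurable (lebesgue_d d)"
proof (rule fmeasurableI2[OF assms])
  have A: "A \<in> sets (lebesgue_d d)"
    using assms by (simp add: fmeasurable_def)
  then have "{x \<in> A. t \<le> dist_d d x z} = A \<inter> {x \<in> space (lebesgue_d d). t \<le> dist_d d x z}"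
    using sets.sets_into_space[OF A] by auto
  moreover have "{x \<in> space (lebesgue_d d). t \<le> dist_d d x z} \<in> sets (lebesgue_d d)"
    by measurable
  ultimately show "{x \<in> A. t \<le> dist_d d x z} \<in> sets (lebesgue_d d)"
    using A by (simp only: sets.Int)
qed auto

lemma C0_point_evaluation_error:
  assumes D: "open_d d (D d)" "D d \<in> sets (lebesgue_d d)" "emeasure (lebesgue_d d) (D d) = 1"
    and L: "L d \<ge> 0" and z: "z \<in> D d" and f: "f \<in> C0 D L d"
  shows "\<bar>S_d D d f - f z\<bar>
         \<le> L d * (\<bar>R\<bar> * sqrt (real d))
           + 2 * measure (lebesgue_d d) {x \<in> D d. R * sqrt (real d) \<le> dist_d d x z}"
proof -
  define Far where "Far = {x \<in> D d. R * sqrt (real d) \<le> dist_d d x z}"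
  define G where "G = (\<lambda>x. L d * (\<bar>R\<bar> * sqrt (real d)) * indicator (D d) x + 2 * indicator Far x)"
  have D_sub: "D d \<subseteq> space_d d"
    by (rule open_d_subset_space[OF D(1)])
  have "D d \<in> fmeasurable (lebesgue_d d)"
    using D by (intro fmeasurableI) auto
  then have fin: "D d \<in> fmeasurable (lebesgue_d d)" "Far \<in> fmeasurable (lebesgue_d d)"
    unfolding Far_def by (auto intro: fmeasurable_dist_d_ge_subset)
  have int_fD: "integrable (lebesgue_d d) (\<lambda>x. indicator (D d) x * f x)"
    using f fin by (intro lipschitz_on_open_integrable[OF D(1,2) _ L, where B=1])
      (auto simp: C0_def fmeasurable_def)
  have int_zD: "integrable (lebesgue_d d) (\<lambda>x. f z * indicator (D d) x)"
    using fin by (intro integrable_mult_right integrable_real_indicator) (auto simp: fmeasurable_def)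
  note int_f = Bochner_Integration.integrable_diff[OF int_fD int_zD]
  have int_G: "integrable (lebesgue_d d) G"
    using fin unfolding G_def by (intro Bochner_Integration.integrable_add integrable_mult_right
        integrable_real_indicator) (auto simp: fmeasurable_def)
  have bound: "\<bar>indicator (D d) x * f x - f z * indicator (D d) x\<bar> \<le> G x" for x
  proof (cases "x \<in> D d")
    case True
    then show ?thesis
      using C0_deviation_le[OF L f True z, of R] by (simp add: G_def Far_def)
  qed (simp add: G_def Far_def)
  have "S_d D d f - f z = (\<integral>x. indicator (D d) x * f x - f z * indicator (D d) x \<partial>lebesgue_d d)"
    using int_fD int_zD D D_sub by (simp add: S_d_eq_integral Int_absorb2 measure_def)
  also have "\<bar>\<dots>\<bar> \<le> integral\<^sup>L (lebesgue_d d) G"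
    using bound by (intro order_trans[OF integral_abs_bound] integral_mono int_G integrable_abs int_f)
  also have "\<dots> = L d * (\<bar>R\<bar> * sqrt (real d)) + 2 * measure (lebesgue_d d) Far"
  proof -
    have "D d \<inter> space_d d = D d" "Far \<inter> space_d d = Far"
      using D_sub by (auto simp: Far_def)
    then show ?thesis
      using fin D by (simp add: G_def fmeasurable_def measure_def)
  qed
  finally show ?thesis
    by (simp add: Far_def)
qed

lemma C0_eventually_achieves_one_point:
  assumes P: "property_P D" and L: "\<forall>d. L d \<ge> 0"
    and lim: "(\<lambda>d. L d * sqrt (real d)) \<longlonglongrightarrow> 0" and \<epsilon>: "\<epsilon> > 0"
  shows "eventually (\<lambda>d. achieves D d (C0 D L d) 1 \<epsilon>) sequentially"
proof -
  obtain z R where z: "\<forall>d. z d \<in> D d"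
    and far: "(\<lambda>d. measure (lebesgue_d d) {x \<in> D d. dist_d d x (z d) \<ge> R * sqrt (real d)}) \<longlonglongrightarrow> 0"
    using P unfolding property_P_def by blast
  have "(\<lambda>d. \<bar>R\<bar> * (L d * sqrt (real d))
          + 2 * measure (lebesgue_d d) {x \<in> D d. R * sqrt (real d) \<le> dist_d d x (z d)})
        \<longlonglongrightarrow> \<bar>R\<bar> * 0 + 2 * 0"
    using far by (intro tendsto_intros lim)
  then have "eventually (\<lambda>d. L d * (\<bar>R\<bar> * sqrt (real d))
          + 2 * measure (lebesgue_d d) {x \<in> D d. R * sqrt (real d) \<le> dist_d d x (z d)} < \<epsilon>) sequentially"
    using \<epsilon> by (auto dest: order_tendstoD(2) simp: ac_simps)
  then show ?thesis
  proof (rule eventually_mono)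
    fix d
    assume "L d * (\<bar>R\<bar> * sqrt (real d))
          + 2 * measure (lebesgue_d d) {x \<in> D d. R * sqrt (real d) \<le> dist_d d x (z d)} < \<epsilon>"
    then have "\<forall>f\<in>C0 D L d. \<bar>S_d D d f - f (z d)\<bar> \<le> \<epsilon>"
      using P z L C0_point_evaluation_error[where D=D and d=d and R=R]
      by (fastforce simp: property_P_def)
    then show "achieves D d (C0 D L d) 1 \<epsilon>"
      unfolding achieves_def admissible_points_def using z
      by (intro exI[of _ "\<lambda>_ _. z d"] exI[of _ hd]) simp
  qed
qed

lemma not_curse_if_eventually_achieves:
  assumes "\<And>\<epsilon>. \<epsilon> > 0 \<Longrightarrow> eventually (\<lambda>d. achieves D d (F d) n \<epsilon>) sequentially"
  shows "\<not> curse D F"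
proof
  assume "curse D F"
  then obtain c \<epsilon>0 \<gamma> where pos: "c > 0" "\<epsilon>0 > 0" "\<gamma> > 0"
    and inf: "infinite {d. \<forall>\<epsilon>. 0 < \<epsilon> \<and> \<epsilon> \<le> \<epsilon>0 \<longrightarrow>
        (\<forall>n. achieves D d (F d) n \<epsilon> \<longrightarrow> real n \<ge> c * (1 + \<gamma>) ^ d)}"
    unfolding curse_def by blast
  have "LIM d sequentially. (1 + \<gamma>) ^ d :> at_top"
    using filterlim_at_infinity_imp_norm_at_top[OF filterlim_realpow_sequentially_gt1[of "1 + \<gamma>"]]
      pos(3) by simp
  then have "LIM d sequentially. c * (1 + \<gamma>) ^ d :> at_top"
    by (rule filterlim_tendsto_pos_mult_at_top[OF tendsto_const pos(1)])
  then have "eventually (\<lambda>d. real n < c * (1 + \<gamma>) ^ d) sequentially"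
    by (simp add: filterlim_at_top_dense)
  with assms[OF pos(2)] have "eventually (\<lambda>d. \<not> (\<forall>\<epsilon>. 0 < \<epsilon> \<and> \<epsilon> \<le> \<epsilon>0 \<longrightarrow>
        (\<forall>n. achieves D d (F d) n \<epsilon> \<longrightarrow> real n \<ge> c * (1 + \<gamma>) ^ d))) sequentially"
    by eventually_elim (use pos(2) in force)
  then have "finite {d. \<forall>\<epsilon>. 0 < \<epsilon> \<and> \<epsilon> \<le> \<epsilon>0 \<longrightarrow>
        (\<forall>n. achieves D d (F d) n \<epsilon> \<longrightarrow> real n \<ge> c * (1 + \<gamma>) ^ d)}"
    by (simp only: cofinite_eq_sequentially[symmetric] eventually_cofinite not_not)
  with inf show False
    by contradiction
qed

lemma tendsto_zero_if_limsup_nonpos: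
  fixes u :: "nat \<Rightarrow> real"
  assumes "\<And>d. 0 \<le> u d" and "limsup (\<lambda>d. ereal (u d)) \<le> 0"
  shows "u \<longlonglongrightarrow> 0"
proof (rule order_tendstoI)
  fix y :: real
  assume "y < 0"
  then show "eventually (\<lambda>d. y < u d) sequentially"
    using assms(1) by (simp add: less_le_trans)
next
  fix y :: real
  assume "0 < y"
  then have "limsup (\<lambda>d. ereal (u d)) < ereal y"
    using assms(2) by (simp add: le_less_trans)
  then show "eventually (\<lambda>d. u d < y) sequentially"
    by (auto dest: Limsup_lessD elim: eventually_mono)
qed

lemma frequently_gt_if_limsup_pos:
  fixes u :: "nat \<Rightarrow> real"
  assumes "0 < limsup (\<lambda>d. ereal (u d))"
  obtains c where "c > 0" "\<exists>\<^sub>F d in sequentially. c < u d"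
proof -
  obtain c where c: "0 < ereal c" "ereal c < limsup (\<lambda>d. ereal (u d))"
    using ereal_dense2[OF assms] by blast
  have "\<not> eventually (\<lambda>d. ereal (u d) \<le> ereal c) sequentially"
  proof
    assume "eventually (\<lambda>d. ereal (u d) \<le> ereal c) sequentially"
    then have "limsup (\<lambda>d. ereal (u d)) \<le> ereal c"
      by (rule Limsup_bounded)
    with c(2) show False
      by simp
  qed
  then have "\<exists>\<^sub>F d in sequentially. c < u d"
    by (simp add: not_eventually not_le)
  with c(1) that show thesis
    by simp
qed

lemma curse_C0_if_frequently_large:
  assumes P: "property_P D" and L: "\<forall>d. L d \<ge> 0"
    and c: "c > 0" "\<exists>\<^sub>F d in sequentially. c < L d * sqrt (real d)"
  shows "curse D (C0 D L)"
proof -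
  define a where "a = min 1 (c / (4 * exp (1/2) * sqrt (2 * pi)))"
  have "a > 0"
    using c(1) by (simp add: a_def)
  have "2 ^ d / 2 \<le> real n"
    if "c < L d * sqrt (real d)" "0 < \<epsilon> \<and> \<epsilon> \<le> a / 4" "achieves D d (C0 D L d) n \<epsilon>" for d n \<epsilon>
  proof (rule C0_information_lower_bound[where D=D and L=L and c=c])
    show "\<epsilon> < min 1 (c / (4 * exp (1/2) * sqrt (2 * pi))) / 2"
      using that(2) \<open>a > 0\<close> unfolding a_def[symmetric] by linarith
  qed (use P L that in \<open>auto simp: property_P_def\<close>)
  then have "{d. c < L d * sqrt (real d)} \<subseteq> {d. \<forall>\<epsilon>. 0 < \<epsilon> \<and> \<epsilon> \<le> a / 4 \<longrightarrow>
          (\<forall>n. achieves D d (C0 D L d) n \<epsilon> \<longrightarrow> real n \<ge> 1/2 * (1 + 1) ^ d)}"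
    by auto
  then show "curse D (C0 D L)"
    using c(2) \<open>a > 0\<close> unfolding curse_def cofinite_eq_sequentially[symmetric] frequently_cofinite
    by (intro exI[of _ "1/2"] exI[of _ "a / 4"] exI[of _ 1]) (auto dest: infinite_super)
qed

theorem theorem3p1:
  fixes D :: "nat \<Rightarrow> (nat \<Rightarrow> real) set" and L :: "nat \<Rightarrow> real"
  assumes "property_P D"
    and "\<forall>d. L d > 0"
  shows "curse D (C0 D L) \<longleftrightarrow> limsup (\<lambda>d. ereal (L d * sqrt (real d))) > 0"
proof
  assume curse: "curse D (C0 D L)"
  show "limsup (\<lambda>d. ereal (L d * sqrt (real d))) > 0"
  proof (rule ccontr)
    assume "\<not> ?thesis"
    then have "(\<lambda>d. L d * sqrt (real d)) \<longlonglongrightarrow> 0"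
      using assms(2) by (intro tendsto_zero_if_limsup_nonpos) (auto simp: less_imp_le)
    then have "\<not> curse D (C0 D L)"
      using assms by (intro not_curse_if_eventually_achieves[where n=1] C0_eventually_achieves_one_point)
        (auto simp: less_imp_le)
    with curse show False
      by contradiction
  qed
next
  assume "limsup (\<lambda>d. ereal (L d * sqrt (real d))) > 0"
  then obtain c where "c > 0" "\<exists>\<^sub>F d in sequentially. c < L d * sqrt (real d)"
    by (rule frequently_gt_if_limsup_pos)
  with assms show "curse D (C0 D L)"
    by (intro curse_C0_if_frequently_large) (auto simp: less_imp_le)
qed

end
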